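(* Let $0<q<1$ and $\lambda>0$, and let $X$ be a random variable with distribution function $F_X(t)=1-e_q(-\lambda t)$ for $t\ge 0$ (and $F_X(t)=0$ for $t<0$). Then $P_X$ is moment indeterminate in the classical sense, i.e. there exists a probability distribution on $[0,\infty)$ different from $P_X$ having the same moments $\int t^n\,dP$ for all $n\in\mathbb{N}_0$.
   Context: The $q$-exponential function is $e_q(t)=\prod_{j=0}^\infty\bigl(1-t(1-q)q^j\bigr)^{-1}$, so that $e_q(-\lambda t)=\prod_{j=0}^\infty\bigl(1+\lambda(1-q)q^jt\bigr)^{-1}$ for $t\ge0$. This $F_X$ is the distribution function of the $q$-exponential distribution, whose $q$-density is $\lambda e_q(-\lambda t)$; it is absolutely continuous with finite moments of all orders. *)

theory Defs
  imports "HOL-Probability.Probability"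
begin

definition qexp_neg :: "real \<Rightarrow> real \<Rightarrow> real \<Rightarrow> real" where
  "qexp_neg q lam t = (\<Prod>j. inverse (1 + lam * (1 - q) * q ^ j * t))"

definition qexp_cdf :: "real \<Rightarrow> real \<Rightarrow> real \<Rightarrow> real" where
  "qexp_cdf q lam t = (if t < 0 then 0 else 1 - qexp_neg q lam t)"

end

(*
  The q-exponential density f = - S' with S(t) = e_q(-lambda t) = prod_j (1 + kappa q^j t)^(-1),
  kappa = lambda (1 - q), decays only like exp (- c (ln t)^2): splitting the product at
  j ~ ln t / (- ln q) shows - ln S(t) = O((ln t)^2).  Hence f + eps psi >= 0 for Stieltjes'
  function psi(t) = exp (- c (ln t)^2) sin (2 pi c ln t) and a small eps > 0.  All moments of psi
  vanish (substitute t = e^u and complete the square to reach an odd Gaussian integrand), so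
  f + eps psi is a second density on [0, oo) with the moments of f.
*)
theory Submission
  imports Defs "HOL-Probability.Sinc_Integral"
begin

section \<open>Stieltjes' function with vanishing moments\<close>

definition stieltjes_psi :: "real \<Rightarrow> real \<Rightarrow> real" where
  "stieltjes_psi c t = (if 0 < t then exp (- c * (ln t)\<^sup>2) * sin (2 * pi * c * ln t) else 0)"

lemma borel_measurable_stieltjes_psi [measurable]: "stieltjes_psi c \<in> borel_measurable borel"
proof -
  have "continuous_on {0<..} (\<lambda>t. exp (- c * (ln t)\<^sup>2) * sin (2 * pi * c * ln t))"
    by (intro continuous_intros) auto
  then have "(\<lambda>t. indicator {0<..} t *\<^sub>R (exp (- c * (ln t)\<^sup>2) * sin (2 * pi * c * ln t)))
               \<in> borel_measurable borel"
    by (intro borel_measurable_continuous_on_indicator) auto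
  also have "(\<lambda>t. indicator {0<..} t *\<^sub>R (exp (- c * (ln t)\<^sup>2) * sin (2 * pi * c * ln t))) = stieltjes_psi c"
    by (auto simp: stieltjes_psi_def fun_eq_iff indicator_def)
  finally show ?thesis .
qed

lemma abs_stieltjes_psi_le: "\<bar>stieltjes_psi c t\<bar> \<le> exp (- c * (ln t)\<^sup>2)"
  using abs_sin_le_one[of "2 * pi * c * ln t"] by (auto simp: stieltjes_psi_def abs_mult mult_left_le)

lemma stieltjes_psi_pos:
  assumes "0 < c" "1 < t" "t < exp (1 / (2 * c))"
  shows "0 < stieltjes_psi c t"
proof -
  have "ln t < 1 / (2 * c)"
    using assms by (metis exp_gt_zero ln_exp ln_less_cancel_iff less_trans zero_less_one)
  then have "2 * pi * c * ln t < pi" using assms(1) by (simp add: field_simps)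
  moreover have "0 < 2 * pi * c * ln t" using assms by simp
  ultimately show ?thesis using assms by (simp add: stieltjes_psi_def sin_gt_zero)
qed

lemma integrable_exp_neg_square:
  assumes "0 < c" shows "integrable lborel (\<lambda>v::real. exp (- c * v\<^sup>2))"
proof -
  have gauss: "(\<lambda>v::real. exp (- c * v\<^sup>2)) = (\<lambda>v. sqrt (pi / c) * normal_density 0 (1 / sqrt (2 * c)) v)"
    using assms by (auto simp: fun_eq_iff normal_density_def real_sqrt_divide power_divide field_simps)
  show ?thesis unfolding gauss using assms by (intro integrable_mult_right integrable_normal_density) auto
qed

lemma gauss_sine_integral:
  assumes "0 < c"
  shows "integrable lborel (\<lambda>v. exp (- c * v\<^sup>2) * sin (2 * pi * c * v))"
    and "(\<integral>v. exp (- c * v\<^sup>2) * sin (2 * pi * c * v) \<partial>lborel) = 0"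
proof -
  let ?g = "\<lambda>v. exp (- c * v\<^sup>2) * sin (2 * pi * c * v)"
  show "integrable lborel ?g"
  proof (rule Bochner_Integration.integrable_bound[OF integrable_exp_neg_square[OF assms]])
    show "AE v in lborel. norm (?g v) \<le> norm (exp (- c * v\<^sup>2))"
      using abs_sin_le_one by (auto simp: abs_mult mult_left_le)
  qed simp
  have "integral\<^sup>L lborel ?g = \<bar>-1\<bar> *\<^sub>R integral\<^sup>L lborel (\<lambda>v. ?g (0 + (-1) * v))"
    by (rule lborel_integral_real_affine) simp
  also have "\<dots> = - integral\<^sup>L lborel ?g" by simp
  finally show "integral\<^sup>L lborel ?g = 0" by simp
qed

lemma lborel_exp_substitution:
  fixes f :: "real \<Rightarrow> real"
  assumes [measurable]: "f \<in> borel_measurable borel"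
    and f_nonpos: "\<And>t. t \<le> 0 \<Longrightarrow> f t = 0"
    and int: "integrable lborel (\<lambda>u. exp u * f (exp u))"
  shows "integrable lborel f" and "integral\<^sup>L lborel f = (\<integral>u. exp u * f (exp u) \<partial>lborel)"
proof -
  have "(\<lambda>u. \<bar>exp u\<bar> * f (exp u)) absolutely_integrable_on UNIV"
    using int by (simp add: absolutely_integrable_onI integrable_on_lborel integrable_norm)
  moreover have "integral UNIV (\<lambda>u. \<bar>exp u\<bar> * f (exp u)) = (\<integral>u. exp u * f (exp u) \<partial>lborel)"
    using integral_lborel[OF int] by simp
  ultimately have "(\<lambda>u. \<bar>exp u\<bar> * f (exp u)) absolutely_integrable_on UNIV \<and>
      integral UNIV (\<lambda>u. \<bar>exp u\<bar> * f (exp u)) = (\<integral>u. exp u * f (exp u) \<partial>lborel)" ..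
  then have "f absolutely_integrable_on exp ` UNIV \<and>
      integral (exp ` UNIV) f = (\<integral>u. exp u * f (exp u) \<partial>lborel)"
    by (subst (asm) has_absolute_integral_change_of_variables_1'[where g=exp and g'=exp])
       (auto intro!: derivative_eq_intros inj_onI)
  moreover have "exp ` UNIV = {0::real<..}"
    by (auto, metis exp_ln rangeI)
  moreover have restrict: "(\<lambda>t. if t \<in> {0<..} then f t else 0) = f"
    using f_nonpos by (auto simp: fun_eq_iff)
  ultimately have abs_int: "f absolutely_integrable_on UNIV"
    and integral_eq: "integral UNIV f = (\<integral>u. exp u * f (exp u) \<partial>lborel)"
    using absolutely_integrable_restrict_UNIV[of "{0<..}" f] integral_restrict_UNIV[of "{0<..}" f]
    by auto
  have "integrable lebesgue f"
    using abs_int by (simp add: set_integrable_def)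
  then show lborel_int: "integrable lborel f"
    by (subst (asm) integrable_completion) auto
  show "integral\<^sup>L lborel f = (\<integral>u. exp u * f (exp u) \<partial>lborel)"
    using integral_lborel[OF lborel_int] integral_eq by simp
qed

(* With t = e^u and u = k + v the n-th moment becomes a multiple of the odd integrand above. *)
lemma stieltjes_psi_moment:
  assumes "0 < c"
  shows "integrable lborel (\<lambda>t. stieltjes_psi c t * t ^ n)"
    and "(\<integral>t. stieltjes_psi c t * t ^ n \<partial>lborel) = 0"
proof -
  let ?g = "\<lambda>v. exp (- c * v\<^sup>2) * sin (2 * pi * c * v)"
  let ?h = "\<lambda>u. exp u * (stieltjes_psi c (exp u) * exp u ^ n)"
  define k where "k = (real n + 1) / (2 * c)"
  have shift: "?h (k + v) = exp (c * k\<^sup>2) * (-1) ^ (n + 1) * ?g v" for v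
  proof -
    have "(real n + 1) * (k + v) - c * (k + v)\<^sup>2 = c * k\<^sup>2 + - c * v\<^sup>2"
      using assms by (simp add: k_def power2_eq_square field_simps)
    moreover have "2 * pi * c * (k + v) = 2 * pi * c * v + real (n + 1) * pi"
      using assms by (simp add: k_def field_simps)
    ultimately show ?thesis
      by (simp add: stieltjes_psi_def sin_add exp_add[symmetric] exp_of_nat_mult[symmetric]
          algebra_simps)
  qed
  have "integrable lborel (\<lambda>v. ?h (k + 1 * v))"
    using gauss_sine_integral(1)[OF assms] by (simp add: shift)
  then have int: "integrable lborel ?h"
    using lborel_integrable_real_affine_iff[of 1 ?h k] by simp
  have "integral\<^sup>L lborel ?h = \<bar>1\<bar> *\<^sub>R integral\<^sup>L lborel (\<lambda>v. ?h (k + 1 * v))"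
    by (rule lborel_integral_real_affine) simp
  also have "\<dots> = 0"
    using gauss_sine_integral(2)[OF assms] by (simp add: shift)
  finally have "integral\<^sup>L lborel ?h = 0" .
  moreover have "t \<le> 0 \<Longrightarrow> stieltjes_psi c t * t ^ n = 0" for t
    by (simp add: stieltjes_psi_def)
  ultimately show "integrable lborel (\<lambda>t. stieltjes_psi c t * t ^ n)"
    and "(\<integral>t. stieltjes_psi c t * t ^ n \<partial>lborel) = 0"
    using lborel_exp_substitution[of "\<lambda>t. stieltjes_psi c t * t ^ n"] int by auto
qed

lemma nonneg_add_stieltjes_psi:
  assumes "0 \<le> \<epsilon>" and "\<And>t. 0 \<le> f t"
    and "\<And>t. 0 < t \<Longrightarrow> \<epsilon> * exp (- c * (ln t)\<^sup>2) \<le> f t"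
  shows "0 \<le> f t + \<epsilon> * stieltjes_psi c t"
proof (cases "0 < t")
  case True
  have "\<bar>\<epsilon> * stieltjes_psi c t\<bar> \<le> \<epsilon> * exp (- c * (ln t)\<^sup>2)"
    using assms(1) abs_stieltjes_psi_le[of c t] by (simp add: abs_mult mult_left_mono)
  then show ?thesis using assms(3)[OF True] abs_ge_minus_self[of "\<epsilon> * stieltjes_psi c t"] by linarith
next
  case False
  then show ?thesis using assms(2) by (simp add: stieltjes_psi_def)
qed

section \<open>Perturbing a density without changing its moments\<close>

lemma not_AE_lborel_interval:
  fixes u v :: real
  assumes "u < v" and "\<And>x. u < x \<Longrightarrow> x < v \<Longrightarrow> \<not> P x"
  shows "\<not> (AE x in lborel. P x)"
proof
  assume "AE x in lborel. P x"
  then obtain N where N: "{x \<in> space lborel. \<not> P x} \<subseteq> N" "emeasure lborel N = 0"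
    "N \<in> sets lborel"
    by (rule AE_E)
  have "{u<..<v} \<subseteq> N" using N(1) assms(2) by auto
  then have "emeasure lborel {u<..<v} \<le> emeasure lborel N"
    using N(3) by (intro emeasure_mono)
  then show False using N(2) emeasure_lborel_Ioo[OF less_imp_le[OF assms(1)]] assms(1) by simp
qed

lemma real_distribution_density:
  fixes f :: "real \<Rightarrow> real"
  assumes [measurable]: "f \<in> borel_measurable borel"
    and "\<And>x. 0 \<le> f x" and "integrable lborel f" and "integral\<^sup>L lborel f = 1"
  shows "real_distribution (density lborel f)"
proof -
  have "emeasure (density lborel f) UNIV = ennreal (integral\<^sup>L lborel f)"
    using assms by (simp add: emeasure_density nn_integral_eq_integral)
  then have "prob_space (density lborel f)"
    using assms(4) by (intro prob_spaceI) simp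
  then show ?thesis by (simp add: real_distribution_def real_distribution_axioms_def)
qed

lemma density_add_null_moments:
  fixes f g :: "real \<Rightarrow> real"
  assumes [measurable]: "f \<in> borel_measurable borel" "g \<in> borel_measurable borel"
    and f_nonneg: "\<And>x. 0 \<le> f x" and sum_nonneg: "\<And>x. 0 \<le> f x + g x"
    and f_total: "integral\<^sup>L lborel f = 1"
    and f_moment: "\<And>n. integrable lborel (\<lambda>x. f x * x ^ n)"
    and g_moment: "\<And>n. integrable lborel (\<lambda>x. g x * x ^ n)"
    and g_null_moment: "\<And>n. (\<integral>x. g x * x ^ n \<partial>lborel) = 0"
    and g_nonzero: "\<not> (AE x in lborel. g x = 0)"
  shows "real_distribution (density lborel (\<lambda>x. f x + g x))"
    and "density lborel (\<lambda>x. f x + g x) \<noteq> density lborel f"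
    and "\<And>n. integrable (density lborel (\<lambda>x. f x + g x)) (\<lambda>x. x ^ n)"
    and "\<And>n. (\<integral>x. x ^ n \<partial>density lborel (\<lambda>x. f x + g x)) = (\<integral>x. x ^ n \<partial>density lborel f)"
proof -
  have sum_moment: "integrable lborel (\<lambda>x. (f x + g x) * x ^ n)"
    and sum_moment_eq: "(\<integral>x. (f x + g x) * x ^ n \<partial>lborel) = (\<integral>x. f x * x ^ n \<partial>lborel)" for n
    using f_moment[of n] g_moment[of n] g_null_moment[of n] by (simp_all add: distrib_right)
  show "real_distribution (density lborel (\<lambda>x. f x + g x))"
    using sum_moment[of 0] sum_moment_eq[of 0] f_total sum_nonneg
    by (intro real_distribution_density) simp_all
  show "integrable (density lborel (\<lambda>x. f x + g x)) (\<lambda>x. x ^ n)" for n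
    using sum_moment sum_nonneg by (simp add: integrable_density)
  show "(\<integral>x. x ^ n \<partial>density lborel (\<lambda>x. f x + g x)) = (\<integral>x. x ^ n \<partial>density lborel f)" for n
    using sum_moment_eq sum_nonneg f_nonneg by (simp add: integral_density)
  show "density lborel (\<lambda>x. f x + g x) \<noteq> density lborel f"
  proof
    assume "density lborel (\<lambda>x. f x + g x) = density lborel f"
    then have "AE x in lborel. ennreal (f x + g x) = ennreal (f x)"
      by (intro sigma_finite_measure.density_unique[OF sigma_finite_lborel]) simp_all
    moreover have "ennreal (f x + g x) = ennreal (f x) \<Longrightarrow> g x = 0" for x
      using f_nonneg[of x] sum_nonneg[of x] by simp
    ultimately have "AE x in lborel. g x = 0"
      by (rule eventually_mono)
    with g_nonzero show False ..
  qed
qed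

section \<open>The q-exponential distribution\<close>

locale q_exponential =
  fixes q lam :: real
  assumes q_pos: "0 < q" and q_less_1: "q < 1" and lam_pos: "0 < lam"
begin

definition kappa :: real where "kappa = lam * (1 - q)"

definition log_surv :: "real \<Rightarrow> real" where
  "log_surv t = (\<Sum>j. ln (1 + kappa * q ^ j * t))"

definition hazard :: "real \<Rightarrow> real" where
  "hazard t = (\<Sum>j. kappa * q ^ j / (1 + kappa * q ^ j * t))"

definition surv :: "real \<Rightarrow> real" where
  "surv t = exp (- log_surv t)"

(* For t >= 0, surv t = e_q(-lam t) (qexp_neg_eq_surv) and hazard = - surv' / surv,
   so qexp_density = - surv' is the density of the q-exponential distribution. *)
definition qexp_density :: "real \<Rightarrow> real" where
  "qexp_density t = (if 0 \<le> t then surv t * hazard t else 0)"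

(* An open neighbourhood of [0, oo) on which every factor stays above 1/2; openness is what
   termwise differentiation of log_surv at t = 0 requires. *)
definition hazard_domain :: "real set" where
  "hazard_domain = {- 1 / (2 * kappa) <..}"

lemma kappa_pos: "0 < kappa"
  using q_less_1 lam_pos by (simp add: kappa_def)

lemma summable_geometric_q: "summable (\<lambda>j. C * q ^ j)"
  using q_pos q_less_1 by (intro summable_mult summable_geometric) auto

lemma suminf_geometric_q: "(\<Sum>j. C * q ^ j) = C / (1 - q)"
  using q_pos q_less_1 by (simp add: suminf_mult suminf_geometric)

lemma factor_gt_half:
  assumes "t \<in> hazard_domain" shows "1 / 2 < 1 + kappa * q ^ j * t"
proof (cases "0 \<le> t")
  case True
  then show ?thesis using kappa_pos q_pos by (simp add: add_pos_nonneg)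
next
  case False
  have "- 1 / 2 < kappa * t" using assms kappa_pos by (simp add: hazard_domain_def field_simps)
  moreover have "0 \<le> (- (kappa * t)) * (1 - q ^ j)"
    using False kappa_pos q_pos q_less_1
    by (intro mult_nonneg_nonneg) (auto simp: mult_nonneg_nonpos power_le_one)
  then have "kappa * t \<le> kappa * t * q ^ j" by (simp add: algebra_simps)
  ultimately show ?thesis by (simp add: mult_ac)
qed

lemma nonneg_in_hazard_domain: "0 \<le> t \<Longrightarrow> t \<in> hazard_domain"
  using kappa_pos by (auto simp: hazard_domain_def intro: order.strict_trans2[of _ 0])

lemma open_hazard_domain: "open hazard_domain"
  by (simp add: hazard_domain_def)

lemma convex_hazard_domain: "convex hazard_domain"
  by (simp add: hazard_domain_def)

lemma factor_pos: "0 \<le> t \<Longrightarrow> 0 < 1 + kappa * q ^ j * t"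
  using kappa_pos q_pos by (simp add: add_pos_nonneg)

lemma summable_log_factor:
  assumes "0 \<le> t" shows "summable (\<lambda>j. ln (1 + kappa * q ^ j * t))"
proof (rule summable_comparison_test'[OF summable_geometric_q[of "kappa * t"]])
  fix j
  have "0 \<le> kappa * q ^ j * t" using assms kappa_pos q_pos by simp
  then show "norm (ln (1 + kappa * q ^ j * t)) \<le> kappa * t * q ^ j"
    using ln_add_one_self_le_self[of "kappa * q ^ j * t"] by (simp add: mult_ac)
qed

lemma qexp_neg_eq_surv:
  assumes "0 \<le> t" shows "qexp_neg q lam t = surv t"
proof -
  have "qexp_neg q lam t = (\<Prod>j. exp (- ln (1 + kappa * q ^ j * t)))"
    using factor_pos[OF assms] by (simp add: qexp_neg_def exp_minus kappa_def)
  also have "\<dots> = exp (\<Sum>j. - ln (1 + kappa * q ^ j * t))"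
    by (intro prodinf_exp summable_minus summable_log_factor assms)
  also have "\<dots> = surv t"
    using summable_log_factor[OF assms] by (simp add: surv_def log_surv_def suminf_minus)
  finally show ?thesis .
qed

lemma abs_hazard_term_le:
  assumes "t \<in> hazard_domain"
  shows "norm (kappa * q ^ j / (1 + kappa * q ^ j * t)) \<le> 2 * kappa * q ^ j"
proof -
  have half: "1 / 2 < 1 + kappa * q ^ j * t" by (rule factor_gt_half[OF assms])
  have "0 \<le> kappa * q ^ j" using kappa_pos q_pos by simp
  then have "kappa * q ^ j / (1 + kappa * q ^ j * t) \<le> kappa * q ^ j / (1 / 2)"
    using half by (intro divide_left_mono) auto
  then show ?thesis using half \<open>0 \<le> kappa * q ^ j\<close> by simp
qed

lemma summable_hazard_term:
  "t \<in> hazard_domain \<Longrightarrow> summable (\<lambda>j. kappa * q ^ j / (1 + kappa * q ^ j * t))"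
  by (rule summable_comparison_test'[OF summable_geometric_q[of "2 * kappa"]])
     (use abs_hazard_term_le in \<open>simp add: mult_ac\<close>)

lemma uniform_limit_hazard:
  "uniform_limit hazard_domain (\<lambda>n t. \<Sum>j<n. kappa * q ^ j / (1 + kappa * q ^ j * t))
     hazard sequentially"
  unfolding hazard_def[abs_def]
  by (rule Weierstrass_m_test[OF abs_hazard_term_le])
     (use summable_geometric_q[of "2 * kappa"] in \<open>simp_all add: mult_ac\<close>)

lemma continuous_on_hazard: "continuous_on hazard_domain hazard"
proof (rule uniform_limit_theorem[OF _ uniform_limit_hazard])
  show "\<forall>\<^sub>F n in sequentially.
          continuous_on hazard_domain (\<lambda>t. \<Sum>j<n. kappa * q ^ j / (1 + kappa * q ^ j * t))"
  proof (intro always_eventually allI continuous_on_sum ballI continuous_intros)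
    fix j t assume "t \<in> hazard_domain"
    then show "1 + kappa * q ^ j * t \<noteq> 0" using factor_gt_half[of t j] by simp
  qed
qed simp

lemma log_surv_has_derivative:
  assumes "t \<in> hazard_domain" shows "(log_surv has_field_derivative hazard t) (at t)"
  unfolding log_surv_def[abs_def] hazard_def
proof (rule has_field_derivative_series'(2)[OF convex_hazard_domain])
  show "((\<lambda>t. ln (1 + kappa * q ^ j * t)) has_field_derivative
          kappa * q ^ j / (1 + kappa * q ^ j * t)) (at t within hazard_domain)"
    if "t \<in> hazard_domain" for j t
    using factor_gt_half[OF that, of j] by (auto intro!: derivative_eq_intros)
  show "uniformly_convergent_on hazard_domain
          (\<lambda>n t. \<Sum>j<n. kappa * q ^ j / (1 + kappa * q ^ j * t))"
    using uniform_limit_hazard by (auto simp: uniformly_convergent_on_def)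
  show "0 \<in> hazard_domain" by (simp add: nonneg_in_hazard_domain)
  show "t \<in> interior hazard_domain" using assms open_hazard_domain by (simp add: interior_open)
qed simp

lemma surv_has_derivative:
  "t \<in> hazard_domain \<Longrightarrow> (surv has_field_derivative - surv t * hazard t) (at t)"
  unfolding surv_def[abs_def] by (auto intro!: derivative_eq_intros log_surv_has_derivative)

lemma surv_0: "surv 0 = 1"
  by (simp add: surv_def log_surv_def)

lemma surv_pos: "0 < surv t"
  by (simp add: surv_def)

lemma log_prod_le_log_surv:
  assumes "0 \<le> t" shows "ln (\<Prod>j<m. 1 + kappa * q ^ j * t) \<le> log_surv t"
proof -
  have "ln (\<Prod>j<m. 1 + kappa * q ^ j * t) = (\<Sum>j<m. ln (1 + kappa * q ^ j * t))"
    using factor_pos[OF assms] by (subst ln_prod) (auto simp: less_imp_neq[symmetric])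
  also have "\<dots> \<le> log_surv t"
    unfolding log_surv_def
    using assms kappa_pos q_pos by (intro sum_le_suminf summable_log_factor) auto
  finally show ?thesis .
qed

lemma surv_le_1: "0 \<le> t \<Longrightarrow> surv t \<le> 1"
  using log_prod_le_log_surv[of t 0] by (simp add: surv_def)

lemma surv_le_inverse_power:
  assumes "0 < t" shows "surv t \<le> 1 / ((\<Prod>j<m. kappa * q ^ j) * t ^ m)"
proof -
  have prod_pos: "0 < (\<Prod>j<m. kappa * q ^ j) * t ^ m"
    using assms kappa_pos q_pos by (simp add: prod_pos)
  have "(\<Prod>j<m. kappa * q ^ j) * t ^ m = (\<Prod>j<m. kappa * q ^ j * t)"
    by (simp add: prod.distrib)
  also have "\<dots> \<le> (\<Prod>j<m. 1 + kappa * q ^ j * t)"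
    using assms kappa_pos q_pos by (intro prod_mono) auto
  finally have "ln ((\<Prod>j<m. kappa * q ^ j) * t ^ m) \<le> ln (\<Prod>j<m. 1 + kappa * q ^ j * t)"
    using prod_pos by (subst ln_le_cancel_iff) auto
  then have "ln ((\<Prod>j<m. kappa * q ^ j) * t ^ m) \<le> log_surv t"
    using log_prod_le_log_surv[of t m] assms by simp
  then have "surv t \<le> exp (- ln ((\<Prod>j<m. kappa * q ^ j) * t ^ m))"
    by (simp add: surv_def)
  also have "\<dots> = 1 / ((\<Prod>j<m. kappa * q ^ j) * t ^ m)"
    using prod_pos by (simp add: exp_minus inverse_eq_divide)
  finally show ?thesis .
qed

lemma hazard_nonneg: "0 \<le> t \<Longrightarrow> 0 \<le> hazard t"
  unfolding hazard_def using kappa_pos q_pos factor_pos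
  by (intro suminf_nonneg summable_hazard_term nonneg_in_hazard_domain) (auto intro: less_imp_le)

lemma hazard_le:
  assumes "0 \<le> t" shows "hazard t \<le> kappa / (1 - q)"
proof -
  have "hazard t \<le> (\<Sum>j. kappa * q ^ j)"
    unfolding hazard_def
  proof (rule suminf_le)
    fix j
    have "1 \<le> 1 + kappa * q ^ j * t" and "0 \<le> kappa * q ^ j"
      using assms kappa_pos q_pos by simp_all
    then show "kappa * q ^ j / (1 + kappa * q ^ j * t) \<le> kappa * q ^ j"
      by (simp add: divide_le_eq mult_le_cancel_left1 order_trans)
  qed (use summable_hazard_term[OF nonneg_in_hazard_domain[OF assms]] summable_geometric_q in auto)
  then show ?thesis by (simp add: suminf_geometric_q)
qed

lemma hazard_ge:
  assumes "0 \<le> t" shows "kappa / (1 + kappa * t) \<le> hazard t"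
proof -
  have "(\<Sum>j<1. kappa * q ^ j / (1 + kappa * q ^ j * t)) \<le> hazard t"
    unfolding hazard_def using kappa_pos q_pos factor_pos[OF assms]
    by (intro sum_le_suminf summable_hazard_term nonneg_in_hazard_domain assms)
       (auto intro: less_imp_le)
  then show ?thesis by simp
qed

lemma log_surv_le_split:
  assumes "0 \<le> t"
  shows "log_surv t \<le> real K * ln (1 + kappa * t) + kappa * t * q ^ K / (1 - q)"
proof -
  have summable: "summable (\<lambda>j. ln (1 + kappa * q ^ j * t))"
    by (rule summable_log_factor[OF assms])
  have "log_surv t = (\<Sum>j<K. ln (1 + kappa * q ^ j * t)) + (\<Sum>j. ln (1 + kappa * q ^ (j + K) * t))"
    unfolding log_surv_def using suminf_split_initial_segment[OF summable, of K] by simp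
  also have "(\<Sum>j<K. ln (1 + kappa * q ^ j * t)) \<le> (\<Sum>j<K. ln (1 + kappa * t))"
  proof (rule sum_mono)
    fix j
    have "kappa * q ^ j * t \<le> kappa * t"
      using q_pos q_less_1 kappa_pos assms
      by (simp add: mult_left_le_one_le power_le_one mult.assoc mult.left_commute[of "q ^ j"])
    then show "ln (1 + kappa * q ^ j * t) \<le> ln (1 + kappa * t)"
      using factor_pos[OF assms] factor_pos[OF assms, of 0] by simp
  qed
  also have "(\<Sum>j. ln (1 + kappa * q ^ (j + K) * t)) \<le> (\<Sum>j. kappa * t * q ^ K * q ^ j)"
  proof (rule suminf_le)
    show "ln (1 + kappa * q ^ (j + K) * t) \<le> kappa * t * q ^ K * q ^ j" for j
      using ln_add_one_self_le_self[of "kappa * q ^ (j + K) * t"] assms kappa_pos q_pos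
      by (simp add: power_add mult_ac)
  qed (use summable_ignore_initial_segment[OF summable, of K] summable_geometric_q in auto)
  finally show ?thesis by (simp add: suminf_geometric_q)
qed

(* Split where q^K drops below 1 / (1 + kappa t), i.e. after about ln (1 + kappa t) / (- ln q) terms. *)
lemma log_surv_le:
  assumes "0 \<le> t"
  shows "log_surv t \<le> (ln (1 + kappa * t))\<^sup>2 / (- ln q) + ln (1 + kappa * t) + 1 / (1 - q)"
proof -
  define l where "l = ln (1 + kappa * t)"
  define K where "K = nat \<lceil>l / (- ln q)\<rceil>"
  have l_nonneg: "0 \<le> l" using assms kappa_pos by (simp add: l_def)
  have ln_q: "0 < - ln q" using q_pos q_less_1 by simp
  have K_le: "real K \<le> l / (- ln q) + 1"
    using l_nonneg ln_q of_int_ceiling_le_add_one[of "l / (- ln q)"] by (simp add: K_def)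
  have "l / (- ln q) \<le> real K" unfolding K_def by linarith
  then have "l \<le> real K * (- ln q)" using pos_divide_le_eq[OF ln_q] by blast
  have "q ^ K = exp (- (real K * (- ln q)))"
    using q_pos by (simp add: exp_of_nat_mult)
  also have "\<dots> \<le> exp (- l)"
    using \<open>l \<le> real K * (- ln q)\<close> by simp
  also have "\<dots> = 1 / (1 + kappa * t)"
    using factor_pos[OF assms, of 0] by (simp add: l_def exp_minus inverse_eq_divide)
  finally have "q ^ K * (1 + kappa * t) \<le> 1"
    using factor_pos[OF assms, of 0] by (simp add: le_divide_eq)
  moreover have "kappa * t * q ^ K \<le> q ^ K * (1 + kappa * t)"
    using q_pos by (simp add: algebra_simps)
  ultimately have "kappa * t * q ^ K \<le> 1" by linarith
  then have "kappa * t * q ^ K / (1 - q) \<le> 1 / (1 - q)"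
    using q_less_1 by (simp add: divide_right_mono)
  moreover have "real K * l \<le> (l / (- ln q) + 1) * l"
    using K_le l_nonneg by (simp add: mult_right_mono)
  ultimately show ?thesis
    using log_surv_le_split[OF assms, of K]
    by (simp add: l_def power2_eq_square algebra_simps)
qed

lemma ln_one_plus_kappa_le:
  assumes "0 < t" shows "ln (1 + kappa * t) \<le> ln (1 + kappa) + \<bar>ln t\<bar>"
proof (cases "t \<le> 1")
  case True
  then have "ln (1 + kappa * t) \<le> ln (1 + kappa)"
    using assms kappa_pos by (subst ln_le_cancel_iff) (auto simp: mult_left_le add_pos_pos)
  then show ?thesis by simp
next
  case False
  then have "1 + kappa * t \<le> t * (1 + kappa)" by (simp add: algebra_simps)
  then have "ln (1 + kappa * t) \<le> ln (t * (1 + kappa))"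
    using assms kappa_pos by (subst ln_le_cancel_iff) (auto simp: add_pos_pos)
  also have "\<dots> = ln t + ln (1 + kappa)"
    using assms kappa_pos by (simp add: ln_mult)
  finally show ?thesis by simp
qed

lemma qexp_density_nonneg: "0 \<le> qexp_density t"
  by (simp add: qexp_density_def surv_pos less_imp_le hazard_nonneg)

lemma borel_measurable_qexp_density [measurable]: "qexp_density \<in> borel_measurable borel"
proof -
  have "continuous_on hazard_domain surv"
    using surv_has_derivative by (intro continuous_at_imp_continuous_on ballI DERIV_isCont) auto
  then have "continuous_on {0..} (\<lambda>t. surv t * hazard t)"
    using continuous_on_hazard nonneg_in_hazard_domain
    by (intro continuous_intros) (auto elim!: continuous_on_subset)
  then have "(\<lambda>t. indicator {0..} t *\<^sub>R (surv t * hazard t)) \<in> borel_measurable borel"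
    by (intro borel_measurable_continuous_on_indicator) auto
  also have "(\<lambda>t. indicator {0..} t *\<^sub>R (surv t * hazard t)) = qexp_density"
    by (auto simp: qexp_density_def fun_eq_iff indicator_def)
  finally show ?thesis .
qed

lemma qexp_density_has_integral:
  assumes "0 \<le> x" shows "(qexp_density has_integral (1 - surv x)) {0..x}"
proof -
  have "((\<lambda>t. surv t * hazard t) has_integral (- surv x - - surv 0)) {0..x}"
  proof (rule fundamental_theorem_of_calculus[OF assms])
    fix t assume "t \<in> {0..x}"
    then have "((\<lambda>t. - surv t) has_real_derivative surv t * hazard t) (at t)"
      using surv_has_derivative[OF nonneg_in_hazard_domain] DERIV_minus by fastforce
    then show "((\<lambda>t. - surv t) has_vector_derivative surv t * hazard t) (at t within {0..x})"
      by (simp add: has_real_derivative_iff_has_vector_derivative has_vector_derivative_at_within)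
  qed
  then show ?thesis
    by (subst has_integral_cong[where g="\<lambda>t. surv t * hazard t"]) (auto simp: qexp_density_def surv_0)
qed

lemma emeasure_qexp_density_atMost:
  "emeasure (density lborel qexp_density) {..x} = ennreal (if x < 0 then 0 else 1 - surv x)"
proof -
  have "emeasure (density lborel qexp_density) {..x}
      = (\<integral>\<^sup>+ t. ennreal (indicator {0..x} t * qexp_density t) \<partial>lborel)"
    by (subst emeasure_density) (auto simp: indicator_def intro!: nn_integral_cong, simp add: qexp_density_def)
  also have "\<dots> = ennreal (if x < 0 then 0 else 1 - surv x)"
    using nn_integral_has_integral_lebesgue[OF qexp_density_nonneg qexp_density_has_integral]
    by (cases "x < 0") auto
  finally show ?thesis .
qed

lemma surv_tendsto_0: "(surv \<longlongrightarrow> 0) at_top"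
proof (rule tendsto_sandwich[where f="\<lambda>_. 0" and h="\<lambda>t. inverse (kappa * t)"])
  show "\<forall>\<^sub>F t in at_top. 0 \<le> surv t"
    by (simp add: surv_pos less_imp_le)
  show "\<forall>\<^sub>F t in at_top. surv t \<le> inverse (kappa * t)"
    using eventually_gt_at_top[of 0]
    by eventually_elim (use surv_le_inverse_power[of _ 1] in \<open>simp add: inverse_eq_divide\<close>)
  show "((\<lambda>t. inverse (kappa * t)) \<longlongrightarrow> 0) at_top"
    by (intro tendsto_inverse_0_at_top filterlim_tendsto_pos_mult_at_top[OF tendsto_const kappa_pos filterlim_ident])
qed simp

lemma real_distribution_qexp_density: "real_distribution (density lborel qexp_density)"
proof -
  have "(\<lambda>n. emeasure (density lborel qexp_density) {..real n})
          \<longlonglongrightarrow> emeasure (density lborel qexp_density) (\<Union>n. {..real n})"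
    by (intro Lim_emeasure_incseq) (auto simp: incseq_def)
  moreover have "(\<Union>n. {..real n}) = UNIV"
    by (auto intro: real_nat_ceiling_ge)
  moreover have "(\<lambda>n. ennreal (1 - surv (real n))) \<longlonglongrightarrow> ennreal (1 - 0)"
    using filterlim_compose[OF surv_tendsto_0 filterlim_real_sequentially]
    by (intro tendsto_ennrealI tendsto_intros)
  then have "(\<lambda>n. emeasure (density lborel qexp_density) {..real n}) \<longlonglongrightarrow> 1"
    by (simp add: emeasure_qexp_density_atMost)
  ultimately have "emeasure (density lborel qexp_density) UNIV = 1"
    using LIMSEQ_unique by fastforce
  then have "prob_space (density lborel qexp_density)"
    by (intro prob_spaceI) simp
  then show ?thesis by (simp add: real_distribution_def real_distribution_axioms_def)
qed

lemma cdf_qexp_density: "cdf (density lborel qexp_density) x = qexp_cdf q lam x"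
  using surv_le_1[of x]
  by (simp add: cdf_def measure_def emeasure_qexp_density_atMost qexp_cdf_def qexp_neg_eq_surv)

lemma qexp_density_moment_bound:
  obtains K where "\<And>t. qexp_density t * t ^ n * (1 + t\<^sup>2) \<le> K"
proof
  define B where "B = kappa / (1 - q)"
  define C where "C = (\<Prod>j<n + 2. kappa * q ^ j)"
  have "0 < B" using kappa_pos q_less_1 by (simp add: B_def)
  have "0 < C" using kappa_pos q_pos by (simp add: C_def prod_pos)
  show "qexp_density t * t ^ n * (1 + t\<^sup>2) \<le> 2 * B + 2 * B / C" for t
  proof (cases "0 \<le> t")
    case False
    then show ?thesis using \<open>0 < B\<close> \<open>0 < C\<close> by (simp add: qexp_density_def)
  next
    case True
    have "qexp_density t * t ^ n * (1 + t\<^sup>2) = hazard t * (surv t * (t ^ n + t ^ (n + 2)))"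
      using True by (simp add: qexp_density_def power_add power2_eq_square algebra_simps)
    also have "\<dots> \<le> B * (surv t * (t ^ n + t ^ (n + 2)))"
      using hazard_le[OF True] surv_pos[of t] True by (intro mult_right_mono) (auto simp: B_def)
    also have "surv t * (t ^ n + t ^ (n + 2)) \<le> 2 + 2 / C"
    proof (cases "t \<le> 1")
      case True
      then have "t ^ n + t ^ (n + 2) \<le> 2" using \<open>0 \<le> t\<close>
        by (metis add_mono one_add_one power_le_one)
      then have "surv t * (t ^ n + t ^ (n + 2)) \<le> 1 * 2"
        using surv_le_1[OF \<open>0 \<le> t\<close>] \<open>0 \<le> t\<close> by (intro mult_mono) auto
      then show ?thesis using divide_pos_pos[of 2 C] \<open>0 < C\<close> by linarith
    next
      case False
      then have "t ^ n \<le> t ^ (n + 2)" by (intro power_increasing) auto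
      have decay: "surv t * t ^ (n + 2) \<le> 1 / C"
      proof -
        have "surv t \<le> 1 / (C * t ^ (n + 2))"
          using surv_le_inverse_power[of t "n + 2"] False by (simp add: C_def)
        then show ?thesis
          using \<open>0 < C\<close> False by (simp add: le_divide_eq divide_le_eq mult.commute mult.left_commute)
      qed
      have "surv t * (t ^ n + t ^ (n + 2)) \<le> surv t * (2 * t ^ (n + 2))"
        using \<open>t ^ n \<le> t ^ (n + 2)\<close> surv_pos[of t] by (intro mult_left_mono) auto
      also have "\<dots> \<le> 2 / C"
        using decay by simp
      finally show ?thesis using \<open>0 < C\<close> by simp
    qed
    finally show ?thesis using \<open>0 < B\<close> by (simp add: algebra_simps mult_left_mono)
  qed
qed

lemma integrable_qexp_density_moment: "integrable lborel (\<lambda>t. qexp_density t * t ^ n)"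
proof -
  obtain K where K: "\<And>t. qexp_density t * t ^ n * (1 + t\<^sup>2) \<le> K"
    using qexp_density_moment_bound[where n=n] by blast
  have majorant: "integrable lborel (\<lambda>t::real. K * inverse (1 + t\<^sup>2))"
    using integrable_inverse_1_plus_square by (simp add: set_integrable_def)
  have bound: "\<bar>qexp_density t * t ^ n\<bar> \<le> K * inverse (1 + t\<^sup>2)" for t
  proof -
    have "0 \<le> qexp_density t * t ^ n"
      by (cases "0 \<le> t") (simp_all add: qexp_density_def surv_pos less_imp_le hazard_nonneg)
    then show ?thesis using K[of t] by (simp add: field_simps add_pos_nonneg)
  qed
  show ?thesis
  proof (rule Bochner_Integration.integrable_bound[OF majorant])
    show "AE t in lborel. norm (qexp_density t * t ^ n) \<le> norm (K * inverse (1 + t\<^sup>2))"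
      using bound by (intro AE_I2) (metis abs_ge_self order_trans real_norm_def)
  qed simp
qed

lemma integral_qexp_density: "integral\<^sup>L lborel qexp_density = 1"
proof -
  have "ennreal (integral\<^sup>L lborel qexp_density) = emeasure (density lborel qexp_density) UNIV"
    using integrable_qexp_density_moment[of 0] qexp_density_nonneg
    by (simp add: emeasure_density nn_integral_eq_integral)
  also have "\<dots> = 1"
  proof -
    interpret real_distribution "density lborel qexp_density"
      by (rule real_distribution_qexp_density)
    show ?thesis using emeasure_space_1 by simp
  qed
  finally show ?thesis using qexp_density_nonneg by (metis ennreal_eq_1)
qed

lemma qexp_density_ge_exp_neg_log_surv:
  assumes "0 \<le> t"
  shows "kappa * exp (- log_surv t - ln (1 + kappa * t)) \<le> qexp_density t"
proof -
  have "kappa * exp (- log_surv t - ln (1 + kappa * t)) = surv t * (kappa / (1 + kappa * t))"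
    using factor_pos[OF assms, of 0] by (simp add: surv_def exp_diff exp_minus inverse_eq_divide)
  also have "\<dots> \<le> surv t * hazard t"
    using hazard_ge[OF assms] surv_pos[of t] by (intro mult_left_mono) auto
  finally show ?thesis using assms by (simp add: qexp_density_def)
qed

lemma qexp_density_ge_log_normal:
  obtains c \<epsilon> where "0 < c" "0 < \<epsilon>" "\<And>t. 0 < t \<Longrightarrow> \<epsilon> * exp (- c * (ln t)\<^sup>2) \<le> qexp_density t"
proof
  define r where "r = 1 / (- ln q)"
  define A where "A = ln (1 + kappa)"
  define B where "B = (A * r + 1)\<^sup>2 + A\<^sup>2 * r + 2 * A"
  have "0 < r" using q_pos q_less_1 by (simp add: r_def)
  have "0 \<le> A" using kappa_pos by (simp add: A_def)
  show "0 < r + 1" using \<open>0 < r\<close> by simp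
  show "0 < kappa * exp (- (B + 1 / (1 - q)))" using kappa_pos by simp
  fix t :: real assume "0 < t"
  define l where "l = ln (1 + kappa * t)"
  have "0 \<le> l" using \<open>0 < t\<close> kappa_pos by (simp add: l_def)
  have "l \<le> A + \<bar>ln t\<bar>" using ln_one_plus_kappa_le[OF \<open>0 < t\<close>] by (simp add: l_def A_def)
  then have "l\<^sup>2 * r \<le> (A + \<bar>ln t\<bar>)\<^sup>2 * r"
    using \<open>0 \<le> l\<close> \<open>0 < r\<close> by (intro mult_right_mono power_mono) auto
  \<comment> \<open>absorbs the linear term: \<open>2 b w \<le> w\<^sup>2 + b\<^sup>2\<close>\<close>
  moreover have "0 \<le> (\<bar>ln t\<bar> - (A * r + 1))\<^sup>2" by simp
  ultimately have quadratic: "l\<^sup>2 * r + 2 * l \<le> (r + 1) * (ln t)\<^sup>2 + B"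
    using \<open>l \<le> A + \<bar>ln t\<bar>\<close> by (simp add: B_def power2_eq_square algebra_simps)
  have "log_surv t \<le> l\<^sup>2 * r + l + 1 / (1 - q)"
    using log_surv_le[of t] \<open>0 < t\<close> by (simp add: l_def r_def)
  then have "- (B + 1 / (1 - q)) + - (r + 1) * (ln t)\<^sup>2 \<le> - log_surv t - l"
    using quadratic by (simp add: algebra_simps)
  then have "kappa * exp (- (B + 1 / (1 - q))) * exp (- (r + 1) * (ln t)\<^sup>2)
      \<le> kappa * exp (- log_surv t - l)"
    using kappa_pos by (simp add: exp_add[symmetric])
  also have "\<dots> \<le> qexp_density t"
    using qexp_density_ge_exp_neg_log_surv \<open>0 < t\<close> by (simp add: l_def)
  finally show "kappa * exp (- (B + 1 / (1 - q))) * exp (- (r + 1) * (ln t)\<^sup>2) \<le> qexp_density t" .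
qed

end

theorem proposition5:
  fixes q lam :: real and M :: "real measure"
  assumes "0 < q" and "q < 1" and "0 < lam"
    and "real_distribution M"
    and "\<And>t. cdf M t = qexp_cdf q lam t"
  shows "\<exists>N :: real measure. real_distribution N \<and> (AE x in N. 0 \<le> x) \<and> N \<noteq> M \<and>
           (\<forall>n::nat. integrable N (\<lambda>x. x ^ n) \<and>
                      (\<integral>x. x ^ n \<partial>N) = (\<integral>x. x ^ n \<partial>M))"
proof -
  interpret q_exponential q lam using assms(1-3) by unfold_locales
  have M_eq: "M = density lborel qexp_density"
    using cdf_unique[OF assms(4) real_distribution_qexp_density] assms(5) cdf_qexp_density
    by (simp add: fun_eq_iff)
  obtain c \<epsilon> where "0 < c" "0 < \<epsilon>"
    and lower: "\<And>t. 0 < t \<Longrightarrow> \<epsilon> * exp (- c * (ln t)\<^sup>2) \<le> qexp_density t"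
    using qexp_density_ge_log_normal by blast
  let ?N = "density lborel (\<lambda>x. qexp_density x + \<epsilon> * stieltjes_psi c x)"
  have nonneg: "\<And>t. 0 \<le> qexp_density t + \<epsilon> * stieltjes_psi c t"
    using \<open>0 < \<epsilon>\<close> qexp_density_nonneg lower by (intro nonneg_add_stieltjes_psi) auto
  have "\<not> (AE x in lborel. \<epsilon> * stieltjes_psi c x = 0)"
    using \<open>0 < c\<close> \<open>0 < \<epsilon>\<close> stieltjes_psi_pos[OF \<open>0 < c\<close>]
    by (intro not_AE_lborel_interval[of 1 "exp (1 / (2 * c))"]) (auto simp: less_imp_neq[symmetric])
  note perturbed = density_add_null_moments[OF _ _ qexp_density_nonneg nonneg integral_qexp_density
      integrable_qexp_density_moment _ _ this]
  have "AE x in ?N. 0 \<le> x"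
    by (subst AE_density) (measurable, auto simp: qexp_density_def stieltjes_psi_def)
  then show ?thesis
    unfolding M_eq using perturbed stieltjes_psi_moment[OF \<open>0 < c\<close>]
    by (intro exI[of _ ?N]) (simp add: mult.assoc)
qed

end
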